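(* Let $\mathbf a=\{a_1,\dots,a_A\}$, $\mathbf c=\{c_1,\dots,c_C\}$, $d_1,d_2\in\mathbb C\setminus\{0\}$ with $d_2/d_1\notin\{q^m:m\in\mathbb Z\}$, $d_1\mathbf c$ and $d_2\mathbf c$ disjoint from $\Omega_q$, and generic so that all quantities below are defined, and let $s\in\mathbb C\setminus\{0\}$. Fix a square root $\sqrt{d_1/d_2}$ and put $\sqrt{d_2/d_1}:=1/\sqrt{d_1/d_2}$, $\sqrt{d_1d_2}:=d_1\sqrt{d_2/d_1}$. With $$H(\mathbf a,\mathbf c,\{d_1,d_2\};q):=\mathop{\mathrm{Sym}}_{d_1;d_2}\frac{(d_1\mathbf a;q)_\infty}{(d_2/d_1,d_1\mathbf c;q)_\infty}{}_{C}\phi_{A+1}^{\,C-A-2}\!\left(\begin{matrix}d_1\mathbf c\\ d_1\mathbf a,\ qd_1/d_2\end{matrix};q,q\right),$$ one has $$H(\mathbf a,\mathbf c,\{d_1,d_2\};q)=\frac{\sqrt{d_2/d_1}}{(1-q)s(q;q)_\infty\vartheta(d_2/d_1;q)}\int_{s\sqrt{d_2/d_1}}^{s\sqrt{d_1/d_2}}\frac{\big((q\sqrt{d_1/d_2},q\sqrt{d_2/d_1},\mathbf a\sqrt{d_1d_2})\tfrac us;q\big)_\infty}{\big(\mathbf c\sqrt{d_1d_2}\tfrac us;q\big)_\infty}\,d_qu,$$ and the right-hand side is symmetric under interchanging $d_1$ and $d_2$.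
   Context: $q\in\mathbb C$, $0<|q|<1$; $q$-shifted factorials $(a;q)_n$, $(a;q)_\infty$, products of several; a list as entry stands for all its elements, $x\mathbf a=\{xa_i\}$, $(\mathbf u y;q)_\infty=\prod_i(u_iy;q)_\infty$. $\Omega_q=\{q^{-k}:k\in\mathbb N_0\}$. $\vartheta(x;q)=(x,q/x;q)_\infty$. $\mathop{\mathrm{Sym}}_{d_1;d_2}F(d_1,d_2)=F(d_1,d_2)+F(d_2,d_1)$. Basic hypergeometric series ${}_{r+1}\phi_s=\sum_{k\ge0}\frac{(a_1,\dots,a_{r+1};q)_k}{(q,b_1,\dots,b_s;q)_k}((-1)^kq^{\binom k2})^{s-r}z^k$; ${}_{r+1}\phi_s^{\,-p}$ ($p\in\mathbb N_0$) adds $p$ numerator parameters $0$, ${}_{r+1}\phi_s^{\,p}$ adds $p$ denominator parameters $0$. Jackson $q$-integral: $\int_\alpha^\beta g(u)\,d_qu=(1-q)\beta\sum_{n\ge0}q^ng(q^n\beta)-(1-q)\alpha\sum_{n\ge0}q^ng(q^n\alpha)$. *)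

theory Defs
  imports "HOL-Analysis.Analysis"
begin

definition qpoch :: "complex \<Rightarrow> complex \<Rightarrow> nat \<Rightarrow> complex" where
  "qpoch a q n = (\<Prod>j<n. 1 - a * q ^ j)"

definition qpinf :: "complex \<Rightarrow> complex \<Rightarrow> complex" where
  "qpinf a q = prodinf (\<lambda>j. 1 - a * q ^ j)"

definition qpoch_list :: "complex list \<Rightarrow> complex \<Rightarrow> nat \<Rightarrow> complex" where
  "qpoch_list as q n = prod_list (map (\<lambda>a. qpoch a q n) as)"

definition qpinf_list :: "complex list \<Rightarrow> complex \<Rightarrow> complex" where
  "qpinf_list as q = prod_list (map (\<lambda>a. qpinf a q) as)"

definition Omega_q :: "complex \<Rightarrow> complex set" where
  "Omega_q q = range (\<lambda>k::nat. inverse (q ^ k))"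

definition theta :: "complex \<Rightarrow> complex \<Rightarrow> complex" where
  "theta x q = qpinf x q * qpinf (q / x) q"

text \<open>basic hypergeometric series r+1 phi s with numerator list as (length r+1)
  and denominator list bs (length s)\<close>
definition bhs :: "complex list \<Rightarrow> complex list \<Rightarrow> complex \<Rightarrow> complex \<Rightarrow> complex" where
  "bhs as bs q z = (\<Sum>k. qpoch_list as q k / (qpoch q q k * qpoch_list bs q k)
      * ((-1) ^ k * q ^ (k choose 2)) powi (int (length bs) - int (length as) + 1) * z ^ k)"

text \<open>phi with superscript p: p \<ge> 0 adds p denominator zeros, p < 0 adds -p numerator zeros\<close>
definition bhs_sup :: "int \<Rightarrow> complex list \<Rightarrow> complex list \<Rightarrow> complex \<Rightarrow> complex \<Rightarrow> complex" where
  "bhs_sup p as bs q z =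
     (if 0 \<le> p then bhs as (bs @ replicate (nat p) 0) q z
      else bhs (as @ replicate (nat (- p)) 0) bs q z)"

definition jackson :: "(complex \<Rightarrow> complex) \<Rightarrow> complex \<Rightarrow> complex \<Rightarrow> complex \<Rightarrow> complex" where
  "jackson g q \<alpha> \<beta> = (1 - q) * \<beta> * (\<Sum>n. q ^ n * g (q ^ n * \<beta>))
                      - (1 - q) * \<alpha> * (\<Sum>n. q ^ n * g (q ^ n * \<alpha>))"

definition Hterm :: "complex list \<Rightarrow> complex list \<Rightarrow> complex \<Rightarrow> complex \<Rightarrow> complex \<Rightarrow> complex" where
  "Hterm a c d1 d2 q =
     qpinf_list (map (\<lambda>x. d1 * x) a) q / (qpinf (d2 / d1) q * qpinf_list (map (\<lambda>x. d1 * x) c) q)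
     * bhs_sup (int (length c) - int (length a) - 2)
         (map (\<lambda>x. d1 * x) c) (map (\<lambda>x. d1 * x) a @ [q * d1 / d2]) q q"

definition H :: "complex list \<Rightarrow> complex list \<Rightarrow> complex \<Rightarrow> complex \<Rightarrow> complex \<Rightarrow> complex" where
  "H a c d1 d2 q = Hterm a c d1 d2 q + Hterm a c d2 d1 q"

text \<open>right-hand side; r is the fixed square root of d1/d2, so sqrt(d2/d1) = 1/r
  and sqrt(d1 d2) = d1/r\<close>
definition RHS :: "complex list \<Rightarrow> complex list \<Rightarrow> complex \<Rightarrow> complex \<Rightarrow> complex \<Rightarrow> complex \<Rightarrow> complex \<Rightarrow> complex" where
  "RHS a c d1 d2 r s q =
     (1 / r) / ((1 - q) * s * qpinf q q * theta (d2 / d1) q)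
     * jackson (\<lambda>u. qpinf (q * r * u / s) q * qpinf (q / r * u / s) q
                     * qpinf_list (map (\<lambda>x. x * (d1 / r) * u / s) a) q
                     / qpinf_list (map (\<lambda>x. x * (d1 / r) * u / s) c) q)
         q (s / r) (s * r)"

end

theory Submission
  imports Defs
begin

text \<open>Evaluated at a node \<open>q\<^sup>n\<beta>\<close> of the Jackson integral, the integrand turns
  into a tail of infinite products, which differs from the corresponding full products by
  finite q-shifted factorials. Summing over the nodes \<open>\<beta> = s\<surd>(d\<^sub>1/d\<^sub>2)\<close> and
  \<open>\<alpha> = s\<surd>(d\<^sub>2/d\<^sub>1)\<close> therefore reproduces the two series of \<open>H\<close>, up to
  the factors \<open>(q;q)\<^sub>\<infinity>\<vartheta>(d\<^sub>2/d\<^sub>1)\<close> and \<open>(q;q)\<^sub>\<infinity>\<vartheta>(d\<^sub>1/d\<^sub>2)\<close>; these are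
  reconciled by \<open>\<vartheta>(x) = -x \<vartheta>(1/x)\<close>. Symmetry in \<open>d\<^sub>1, d\<^sub>2\<close> is then
  inherited from \<open>H\<close>.\<close>

lemma convergent_prod_qpoch:
  assumes "norm (q::complex) < 1"
  shows "convergent_prod (\<lambda>j. 1 - x * q ^ j)"
proof -
  have "summable (\<lambda>j. norm x * norm q ^ j)"
    using assms by (intro summable_mult summable_geometric) auto
  hence "summable (\<lambda>j. norm ((1 - x * q ^ j) - 1))"
    by (simp add: norm_mult norm_power)
  thus ?thesis
    by (intro abs_convergent_prod_imp_convergent_prod summable_imp_abs_convergent_prod)
qed

lemma qpoch_LIMSEQ_qpinf:
  assumes "norm (q::complex) < 1"
  shows "(\<lambda>n. qpoch x q n) \<longlonglongrightarrow> qpinf x q"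
proof -
  have "(\<lambda>n. \<Prod>i\<le>n. 1 - x * q ^ i) \<longlonglongrightarrow> qpinf x q"
    unfolding qpinf_def by (rule convergent_prod_LIMSEQ[OF convergent_prod_qpoch[OF assms]])
  hence "(\<lambda>n. qpoch x q (Suc n)) \<longlonglongrightarrow> qpinf x q"
    by (simp add: qpoch_def lessThan_Suc_atMost)
  thus ?thesis by (rule LIMSEQ_imp_Suc)
qed

lemma qpoch_Suc: "qpoch x q (Suc k) = qpoch x q k * (1 - x * q ^ k)"
  by (simp add: qpoch_def)

lemma qpoch_add: "qpoch x q (n + m) = qpoch x q n * qpoch (x * q ^ n) q m"
  by (induction m) (simp_all add: qpoch_def power_add mult.assoc)

lemma qpinf_eq_qpoch_mult_qpinf:
  assumes "norm (q::complex) < 1"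
  shows "qpinf x q = qpoch x q n * qpinf (x * q ^ n) q"
proof -
  have "(\<lambda>m. qpoch x q (n + m)) \<longlonglongrightarrow> qpoch x q n * qpinf (x * q ^ n) q"
    unfolding qpoch_add by (intro tendsto_mult tendsto_const qpoch_LIMSEQ_qpinf assms)
  moreover have "(\<lambda>m. qpoch x q (m + n)) \<longlonglongrightarrow> qpinf x q"
    by (rule LIMSEQ_ignore_initial_segment[OF qpoch_LIMSEQ_qpinf[OF assms]])
  hence "(\<lambda>m. qpoch x q (n + m)) \<longlonglongrightarrow> qpinf x q"
    by (simp add: add.commute)
  ultimately show ?thesis by (rule LIMSEQ_unique[rotated])
qed

lemma qpinf_eq_one_minus_mult_qpinf:
  assumes "norm (q::complex) < 1"
  shows "qpinf x q = (1 - x) * qpinf (q * x) q"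
  using qpinf_eq_qpoch_mult_qpinf[OF assms, of x 1] by (simp add: qpoch_def mult.commute)

lemma theta_inverse:
  assumes "norm (q::complex) < 1" "x \<noteq> 0"
  shows "theta x q = - x * theta (1 / x) q"
  unfolding theta_def qpinf_eq_one_minus_mult_qpinf[OF assms(1), of x]
    qpinf_eq_one_minus_mult_qpinf[OF assms(1), of "1 / x"]
  using assms(2) by (simp add: field_simps)

lemma one_minus_mult_power_nonzero:
  assumes "(q::complex) \<noteq> 0" "x \<notin> Omega_q q"
  shows "1 - x * q ^ j \<noteq> 0"
proof
  assume "1 - x * q ^ j = 0"
  hence "x = inverse (q ^ j)" using assms(1) by (simp add: field_simps)
  thus False using assms(2) unfolding Omega_q_def by auto
qed

lemma q_notin_Omega_q:
  assumes "(q::complex) \<noteq> 0" "norm q < 1"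
  shows "q \<notin> Omega_q q"
proof
  assume "q \<in> Omega_q q"
  then obtain k where "q = inverse (q ^ k)" unfolding Omega_q_def by auto
  hence "q ^ Suc k = 1" using assms(1) by (simp add: field_simps)
  hence "norm q ^ Suc k = 1" by (metis norm_one norm_power)
  moreover have "norm q ^ Suc k < 1"
    using assms by (intro power_Suc_less_one) auto
  ultimately show False by simp
qed

lemma qpoch_nonzero:
  assumes "(q::complex) \<noteq> 0" "x \<notin> Omega_q q"
  shows "qpoch x q n \<noteq> 0"
  unfolding qpoch_def using one_minus_mult_power_nonzero[OF assms] by auto

lemma qpinf_nonzero:
  assumes "(q::complex) \<noteq> 0" "norm q < 1" "x \<notin> Omega_q q"
  shows "qpinf x q \<noteq> 0"
  unfolding qpinf_def
  by (rule prodinf_nonzero[OF convergent_prod_qpoch[OF assms(2)]])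
    (use one_minus_mult_power_nonzero[OF assms(1,3)] in auto)

lemma mult_divide_notin_Omega_q:
  assumes "(q::complex) \<noteq> 0" "d \<noteq> 0" "e \<noteq> 0" "e / d \<notin> range (\<lambda>m::int. q powi m)"
  shows "q * d / e \<notin> Omega_q q"
proof
  assume "q * d / e \<in> Omega_q q"
  then obtain k where "q * d / e = inverse (q ^ k)" unfolding Omega_q_def by auto
  hence "e / d = q ^ Suc k"
    using assms(1-3) by (simp add: field_simps)
  hence "e / d = q powi int (Suc k)" by (simp only: power_int_of_nat)
  thus False using assms(4) by blast
qed

lemma inverse_notin_powi_range:
  assumes "x \<notin> range (\<lambda>m::int. (q::complex) powi m)"
  shows "1 / x \<notin> range (\<lambda>m::int. q powi m)"
proof
  assume "1 / x \<in> range (\<lambda>m::int. q powi m)"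
  then obtain m where "1 / x = q powi m" by auto
  hence "x = q powi (- m)" by (metis inverse_eq_divide inverse_inverse_eq power_int_minus)
  thus False using assms by blast
qed

lemma qpoch_list_Suc:
  "qpoch_list xs q (Suc k) = qpoch_list xs q k * prod_list (map (\<lambda>x. 1 - x * q ^ k) xs)"
  by (induction xs) (simp_all add: qpoch_list_def qpoch_Suc mult_ac)

lemma qpoch_zero: "qpoch 0 q k = 1"
  by (simp add: qpoch_def)

lemma qpinf_list_eq_qpoch_list_mult_qpinf_list:
  assumes "norm (q::complex) < 1"
  shows "qpinf_list xs q = qpoch_list xs q n * qpinf_list (map (\<lambda>x. x * q ^ n) xs) q"
proof (induction xs)
  case (Cons y xs)
  show ?case
    using Cons.IH qpinf_eq_qpoch_mult_qpinf[OF assms, of y n]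
    by (simp add: qpinf_list_def qpoch_list_def mult_ac)
qed (simp add: qpinf_list_def qpoch_list_def)

lemma qpoch_list_nonzero:
  assumes "(q::complex) \<noteq> 0" "\<forall>x\<in>set xs. x \<notin> Omega_q q"
  shows "qpoch_list xs q n \<noteq> 0"
  using assms qpoch_nonzero by (auto simp: qpoch_list_def prod_list_zero_iff)

lemma qpinf_list_nonzero:
  assumes "(q::complex) \<noteq> 0" "norm q < 1" "\<forall>x\<in>set xs. x \<notin> Omega_q q"
  shows "qpinf_list xs q \<noteq> 0"
  using assms qpinf_nonzero by (auto simp: qpinf_list_def prod_list_zero_iff)

lemma LIMSEQ_prod_list_one_minus_power:
  assumes "norm (q::complex) < 1"
  shows "(\<lambda>k. prod_list (map (\<lambda>x. 1 - x * q ^ k) xs)) \<longlonglongrightarrow> 1"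
proof (induction xs)
  case (Cons y xs)
  have "(\<lambda>k. 1 - y * q ^ k) \<longlonglongrightarrow> 1 - y * 0"
    by (intro tendsto_intros LIMSEQ_power_zero assms)
  from tendsto_mult[OF this Cons.IH] show ?case by simp
qed simp

definition phi_term :: "complex list \<Rightarrow> complex list \<Rightarrow> complex \<Rightarrow> complex \<Rightarrow> nat \<Rightarrow> complex" where
  "phi_term cs as b q k = q ^ k * qpoch_list cs q k / (qpoch q q k * qpoch_list as q k * qpoch b q k)"

text \<open>The zero parameters added by \<open>bhs_sup\<close> balance the numerator and denominator
  lengths, so the factor \<open>((-1) ^ k * q ^ (k choose 2))\<close> in \<open>bhs\<close> is raised to the power 0.\<close>

lemma bhs_sup_eq_suminf_phi_term:
  "bhs_sup (int (length cs) - int (length as) - 2) cs (as @ [b]) q q = suminf (phi_term cs as b q)"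
  by (auto simp: bhs_sup_def bhs_def phi_term_def qpoch_zero
      qpoch_list_def field_simps intro!: arg_cong[where f = suminf])

lemma summable_phi_term:
  assumes "(q::complex) \<noteq> 0" "norm q < 1" "\<forall>x\<in>set as. x \<notin> Omega_q q" "b \<notin> Omega_q q"
  shows "summable (phi_term cs as b q)"
proof -
  define P where "P xs k = prod_list (map (\<lambda>x. 1 - x * q ^ k) xs)" for xs k
  define R where "R k = q * P cs k / ((1 - q * q ^ k) * P as k * (1 - b * q ^ k))" for k
  have q_Omega: "q \<notin> Omega_q q" by (rule q_notin_Omega_q[OF assms(1,2)])
  have ratio: "phi_term cs as b q (Suc k) = phi_term cs as b q k * R k" for k
  proof -
    have "P as k \<noteq> 0"
      using assms(3) one_minus_mult_power_nonzero[OF assms(1)] by (auto simp: P_def prod_list_zero_iff)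
    moreover note one_minus_mult_power_nonzero[OF assms(1) q_Omega, of k]
      one_minus_mult_power_nonzero[OF assms(1,4), of k]
      qpoch_nonzero[OF assms(1) q_Omega, of k] qpoch_nonzero[OF assms(1,4), of k]
      qpoch_list_nonzero[OF assms(1,3), of k]
    ultimately show ?thesis
      unfolding phi_term_def R_def P_def qpoch_list_Suc qpoch_Suc by (simp add: field_simps)
  qed
  have "R \<longlonglongrightarrow> q * 1 / ((1 - q * 0) * 1 * (1 - b * 0))"
    unfolding R_def P_def
    by (intro tendsto_intros LIMSEQ_prod_list_one_minus_power LIMSEQ_power_zero assms) simp
  hence "(\<lambda>k. norm (R k)) \<longlonglongrightarrow> norm q"
    by (auto dest: tendsto_norm)
  moreover have "norm q < (1 + norm q) / 2" using assms(2) by simp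
  ultimately obtain N where N: "\<And>k. k \<ge> N \<Longrightarrow> norm (R k) < (1 + norm q) / 2"
    by (metis (no_types, lifting) eventually_sequentially order_tendstoD(2))
  show ?thesis
  proof (rule summable_ratio_test[of "(1 + norm q) / 2" N])
    show "(1 + norm q) / 2 < 1" using assms(2) by simp
  next
    fix k assume "k \<ge> N"
    hence "norm (R k) \<le> (1 + norm q) / 2" using N[of k] by simp
    thus "norm (phi_term cs as b q (Suc k)) \<le> (1 + norm q) / 2 * norm (phi_term cs as b q k)"
      unfolding ratio norm_mult by (metis mult.commute mult_right_mono norm_ge_zero)
  qed
qed

text \<open>The integrand of the Jackson integral at the node \<open>u = q\<^sup>n\<beta>\<close>, written in terms
  of \<open>as = d\<^bold>a\<close>, \<open>cs = d\<^bold>c\<close>, \<open>b = qd/e\<close>, where \<open>(d, e)\<close> is \<open>(d\<^sub>1, d\<^sub>2)\<close>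
  for the upper endpoint and \<open>(d\<^sub>2, d\<^sub>1)\<close> for the lower one.\<close>

definition integrand_node :: "complex list \<Rightarrow> complex list \<Rightarrow> complex \<Rightarrow> complex \<Rightarrow> nat \<Rightarrow> complex" where
  "integrand_node as cs b q n = qpinf (b * q ^ n) q * qpinf (q * q ^ n) q
     * qpinf_list (map (\<lambda>x. x * q ^ n) as) q / qpinf_list (map (\<lambda>x. x * q ^ n) cs) q"

lemma integrand_node_eq_phi_term:
  assumes "(q::complex) \<noteq> 0" "norm q < 1" "\<forall>x\<in>set as. x \<notin> Omega_q q"
    "\<forall>x\<in>set cs. x \<notin> Omega_q q" "b \<notin> Omega_q q"
  shows "q ^ n * integrand_node as cs b q n
    = qpinf b q * qpinf q q * qpinf_list as q / qpinf_list cs q * phi_term cs as b q n"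
proof -
  have q_Omega: "q \<notin> Omega_q q" by (rule q_notin_Omega_q[OF assms(1,2)])
  note split_cs = qpinf_list_eq_qpoch_list_mult_qpinf_list[OF assms(2), of cs n]
  have "qpinf_list (map (\<lambda>x. x * q ^ n) cs) q \<noteq> 0"
    using qpinf_list_nonzero[OF assms(1,2,4)] split_cs by auto
  moreover note qpoch_nonzero[OF assms(1,5), of n] qpoch_nonzero[OF assms(1) q_Omega, of n]
    qpoch_list_nonzero[OF assms(1,3), of n] qpoch_list_nonzero[OF assms(1,4), of n]
  ultimately show ?thesis
    unfolding integrand_node_def phi_term_def split_cs
      qpinf_list_eq_qpoch_list_mult_qpinf_list[OF assms(2), of as n]
      qpinf_eq_qpoch_mult_qpinf[OF assms(2), of b n] qpinf_eq_qpoch_mult_qpinf[OF assms(2), of q n]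
    by (simp add: field_simps)
qed

lemma suminf_integrand_node:
  assumes "(q::complex) \<noteq> 0" "norm q < 1" "\<forall>x\<in>set as. x \<notin> Omega_q q"
    "\<forall>x\<in>set cs. x \<notin> Omega_q q" "b \<notin> Omega_q q"
  shows "(\<Sum>n. q ^ n * integrand_node as cs b q n)
    = qpinf b q * qpinf q q * qpinf_list as q / qpinf_list cs q * suminf (phi_term cs as b q)"
  unfolding integrand_node_eq_phi_term[OF assms]
  by (rule suminf_mult[OF summable_phi_term[OF assms(1-3,5)]])

lemma Hterm_eq_integrand_node_sum:
  assumes "(q::complex) \<noteq> 0" "norm q < 1" "d \<noteq> 0" "e \<noteq> 0"
    "e / d \<notin> range (\<lambda>m::int. q powi m)"
    "\<forall>x\<in>set a. d * x \<notin> Omega_q q" "\<forall>x\<in>set c. d * x \<notin> Omega_q q"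
  shows "Hterm a c d e q
    = (\<Sum>n. q ^ n * integrand_node (map (\<lambda>x. d * x) a) (map (\<lambda>x. d * x) c) (q * d / e) q n)
      / (qpinf q q * theta (e / d) q)"
proof -
  have b_Omega: "q * d / e \<notin> Omega_q q" by (rule mult_divide_notin_Omega_q[OF assms(1,3-5)])
  have "(\<Sum>n. q ^ n * integrand_node (map (\<lambda>x. d * x) a) (map (\<lambda>x. d * x) c) (q * d / e) q n)
      = qpinf (q * d / e) q * qpinf q q * qpinf_list (map (\<lambda>x. d * x) a) q
        / qpinf_list (map (\<lambda>x. d * x) c) q
        * suminf (phi_term (map (\<lambda>x. d * x) c) (map (\<lambda>x. d * x) a) (q * d / e) q)"
    by (rule suminf_integrand_node) (use assms(1,2,6,7) b_Omega in auto)
  moreover have "theta (e / d) q = qpinf (e / d) q * qpinf (q * d / e) q"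
    unfolding theta_def using assms(3) by simp
  moreover have "qpinf q q \<noteq> 0" by (rule qpinf_nonzero[OF assms(1,2) q_notin_Omega_q[OF assms(1,2)]])
  moreover have "qpinf (q * d / e) q \<noteq> 0" by (rule qpinf_nonzero[OF assms(1,2) b_Omega])
  ultimately show ?thesis
    unfolding Hterm_def
      bhs_sup_eq_suminf_phi_term[of "map (\<lambda>x. d * x) c" "map (\<lambda>x. d * x) a", simplified]
    by simp
qed

lemma RHS_eq_integrand_node_sums:
  assumes "r ^ 2 = d1 / d2" "d1 \<noteq> 0" "d2 \<noteq> 0" "s \<noteq> 0"
  shows "RHS a c d1 d2 r s q = (1 / r) / ((1 - q) * s * qpinf q q * theta (d2 / d1) q)
    * ((1 - q) * (s * r)
         * (\<Sum>n. q ^ n * integrand_node (map (\<lambda>x. d1 * x) a) (map (\<lambda>x. d1 * x) c) (q * d1 / d2) q n)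
       - (1 - q) * (s / r)
         * (\<Sum>n. q ^ n * integrand_node (map (\<lambda>x. d2 * x) a) (map (\<lambda>x. d2 * x) c) (q * d2 / d1) q n))"
proof -
  have r0: "r \<noteq> 0" using assms(1-3) by auto
  have rr: "d2 * (r * r) = d1" using assms(1,3) by (simp add: power2_eq_square field_simps)
  define g where "g u = qpinf (q * r * u / s) q * qpinf (q / r * u / s) q
    * qpinf_list (map (\<lambda>x. x * (d1 / r) * u / s) a) q
    / qpinf_list (map (\<lambda>x. x * (d1 / r) * u / s) c) q" for u
  have upper: "g (q ^ n * (s * r))
      = integrand_node (map (\<lambda>x. d1 * x) a) (map (\<lambda>x. d1 * x) c) (q * d1 / d2) q n" for n
  proof -
    have "q * r * (q ^ n * (s * r)) / s = q * d1 / d2 * q ^ n"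
      "q / r * (q ^ n * (s * r)) / s = q * q ^ n"
      "\<And>x. x * (d1 / r) * (q ^ n * (s * r)) / s = d1 * x * q ^ n"
      using r0 rr assms(3,4) by (auto simp: field_simps)
    thus ?thesis unfolding g_def integrand_node_def map_map comp_def by simp
  qed
  have lower: "g (q ^ n * (s / r))
      = integrand_node (map (\<lambda>x. d2 * x) a) (map (\<lambda>x. d2 * x) c) (q * d2 / d1) q n" for n
  proof -
    have "q * r * (q ^ n * (s / r)) / s = q * q ^ n"
      "q / r * (q ^ n * (s / r)) / s = q * d2 / d1 * q ^ n"
      "\<And>x. x * (d1 / r) * (q ^ n * (s / r)) / s = d2 * x * q ^ n"
      using r0 rr[symmetric] assms(2-4) by (auto simp: field_simps)
    thus ?thesis unfolding g_def integrand_node_def map_map comp_def by (simp add: mult.commute)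
  qed
  show ?thesis
    unfolding RHS_def jackson_def g_def[symmetric] upper lower by (simp only: mult.assoc)
qed

lemma RHS_eq_H:
  fixes a c :: "complex list" and d1 d2 r s q :: complex
  assumes "q \<noteq> 0" "norm q < 1" "d1 \<noteq> 0" "d2 \<noteq> 0"
    "d2 / d1 \<notin> range (\<lambda>m::int. q powi m)"
    "\<forall>x\<in>set c. d1 * x \<notin> Omega_q q \<and> d2 * x \<notin> Omega_q q"
    "\<forall>x\<in>set a. d1 * x \<notin> Omega_q q \<and> d2 * x \<notin> Omega_q q"
    "s \<noteq> 0" "r ^ 2 = d1 / d2"
  shows "RHS a c d1 d2 r s q = H a c d1 d2 q"
proof -
  define S1 where "S1 = (\<Sum>n. q ^ n * integrand_node (map (\<lambda>x. d1 * x) a) (map (\<lambda>x. d1 * x) c) (q * d1 / d2) q n)"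
  define S2 where "S2 = (\<Sum>n. q ^ n * integrand_node (map (\<lambda>x. d2 * x) a) (map (\<lambda>x. d2 * x) c) (q * d2 / d1) q n)"
  have r0: "r \<noteq> 0" using assms(3,4,9) by auto
  have rr: "1 / (r * r) = d2 / d1" using assms(3,4,9) by (simp add: power2_eq_square)
  have q1: "1 - q \<noteq> 0" using assms(2) by auto
  have jackson_weights: "(1 / r) / ((1 - q) * s * D) * ((1 - q) * (s * r) * A - (1 - q) * (s / r) * B)
      = (A - 1 / (r * r) * B) / D" for A B D :: complex
    using r0 q1 assms(8) by (cases "D = 0") (simp_all add: field_simps)
  have "RHS a c d1 d2 r s q = (S1 - d2 / d1 * S2) / (qpinf q q * theta (d2 / d1) q)"
    unfolding RHS_eq_integrand_node_sums[OF assms(9,3,4,8)] S1_def[symmetric] S2_def[symmetric]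
      mult.assoc[of "(1 - q) * s"] jackson_weights rr ..
  also have "\<dots> = S1 / (qpinf q q * theta (d2 / d1) q) + S2 / (qpinf q q * theta (d1 / d2) q)"
  proof -
    have "theta (d2 / d1) q = - (d2 / d1) * theta (d1 / d2) q"
      using theta_inverse[OF assms(2), of "d2 / d1"] assms(3,4) by simp
    hence "d2 / d1 * S2 / (qpinf q q * theta (d2 / d1) q) = - (S2 / (qpinf q q * theta (d1 / d2) q))"
      using assms(3,4) by (cases "qpinf q q * theta (d1 / d2) q = 0") (auto simp: field_simps)
    thus ?thesis by (simp add: diff_divide_distrib)
  qed
  also have "\<dots> = H a c d1 d2 q"
    unfolding H_def S1_def S2_def
    using Hterm_eq_integrand_node_sum[OF assms(1-4,5)]
      Hterm_eq_integrand_node_sum[OF assms(1,2,4,3) inverse_notin_powi_range[OF assms(5), simplified]]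
      assms(6,7) by simp
  finally show ?thesis .
qed

theorem theorem2p4:
  fixes a c :: "complex list" and d1 d2 r s q :: complex
  assumes "q \<noteq> 0" and "norm q < 1"
    and "d1 \<noteq> 0" and "d2 \<noteq> 0"
    and "d2 / d1 \<notin> range (\<lambda>m::int. q powi m)"
    and "\<forall>x\<in>set c. d1 * x \<notin> Omega_q q \<and> d2 * x \<notin> Omega_q q"
    and "\<forall>x\<in>set a. d1 * x \<notin> Omega_q q \<and> d2 * x \<notin> Omega_q q"
    and "s \<noteq> 0"
    and "r ^ 2 = d1 / d2"
  shows "H a c d1 d2 q = RHS a c d1 d2 r s q
    \<and> (\<forall>r'. r' ^ 2 = d2 / d1 \<longrightarrow> RHS a c d2 d1 r' s q = RHS a c d1 d2 r s q)"
proof -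
  have swapped: "RHS a c d2 d1 r' s q = H a c d2 d1 q" if "r' ^ 2 = d2 / d1" for r'
    by (rule RHS_eq_H) (use assms inverse_notin_powi_range[OF assms(5)] that in auto)
  have "H a c d2 d1 q = H a c d1 d2 q" unfolding H_def by (rule add.commute)
  with swapped RHS_eq_H[OF assms] show ?thesis by simp
qed

end
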